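(* Let $\omega=-\frac12+i\frac{\sqrt3}{2}$ and let the Eisenstein lattice be $\{m+n\omega : m,n\in\mathbb{Z}\}\subset\mathbb{C}$. Up to Euclidean motions (isometries of the plane), there are exactly two equable triangles whose vertices all lie on the Eisenstein lattice. They are realized by the following vertices: (a) $A=8+4\omega$, $B=4+8\omega$, $C=0$; (b) $A=6+3\omega$, $B=8+16\omega$, $C=0$.
   Context: A triangle is a non-degenerate triangle in the plane $\mathbb{C}\cong\mathbb{R}^2$. A triangle is called equable if its perimeter equals its area (as real numbers). *)

theory Defs
  imports "HOL-Analysis.Analysis"
begin

definition eis_omega :: complex where
  "eis_omega = Complex (-1/2) (sqrt 3 / 2)"

definition eisenstein_lattice :: "complex set" where
  "eisenstein_lattice = {of_int m + of_int n * eis_omega | m n :: int. True}"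

definition nondegenerate_triangle :: "complex \<Rightarrow> complex \<Rightarrow> complex \<Rightarrow> bool" where
  "nondegenerate_triangle A B C \<longleftrightarrow> Im ((B - A) * cnj (C - A)) \<noteq> 0"

definition tri_perimeter :: "complex \<Rightarrow> complex \<Rightarrow> complex \<Rightarrow> real" where
  "tri_perimeter A B C = dist A B + dist B C + dist C A"

definition tri_area :: "complex \<Rightarrow> complex \<Rightarrow> complex \<Rightarrow> real" where
  "tri_area A B C = \<bar>Im ((B - A) * cnj (C - A))\<bar> / 2"

definition equable :: "complex \<Rightarrow> complex \<Rightarrow> complex \<Rightarrow> bool" where
  "equable A B C \<longleftrightarrow> nondegenerate_triangle A B C \<and> tri_perimeter A B C = tri_area A B C"

definition congruent_tri :: "complex \<Rightarrow> complex \<Rightarrow> complex \<Rightarrow> complex \<Rightarrow> complex \<Rightarrow> complex \<Rightarrow> bool" where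
  "congruent_tri A B C A' B' C' \<longleftrightarrow>
     (\<exists>f :: complex \<Rightarrow> complex. (\<forall>x y. dist (f x) (f y) = dist x y) \<and> f ` {A, B, C} = {A', B', C'})"

end

(*
  Between lattice points all squared distances are integers, and twice the area of a lattice
  triangle is sqrt 3 / 2 times an integer.  So for an equable lattice triangle the perimeter
  s = a + b + c is sqrt 3 times a rational number; squaring a + b = s - c twice shows that
  sqrt 3 * c is rational, whence c = sqrt 3 * k with k an integer.  With all sides of the form
  sqrt 3 * k_i, Heron's formula turns equability into the Diophantine equation
  16 (k1 + k2 + k3) = 3 (k2 + k3 - k1) (k3 + k1 - k2) (k1 + k2 - k3),
  whose only solutions up to order are (4, 4, 4) and (3, 7, 8).  By side-side-side congruence,
  every equable lattice triangle is congruent to one of the two given ones.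
*)

theory Submission
  imports Defs "HOL-Computational_Algebra.Primes"
begin

section \<open>Heron's formula and equable triangles\<close>

lemma tri_area_heron:
  fixes A B C :: complex
  defines "a \<equiv> dist B C" and "b \<equiv> dist C A" and "c \<equiv> dist A B"
  shows "16 * (tri_area A B C)\<^sup>2 = (a + b + c) * (b + c - a) * (c + a - b) * (a + b - c)"
proof -
  define u where "u = B - A"
  define v where "v = C - A"
  have a: "a\<^sup>2 = (Re u - Re v)\<^sup>2 + (Im u - Im v)\<^sup>2"
    unfolding a_def u_def v_def dist_norm cmod_power2 by (simp add: power2_commute)
  have b: "b\<^sup>2 = (Re v)\<^sup>2 + (Im v)\<^sup>2"
    unfolding b_def v_def dist_norm cmod_power2 by (simp add: power2_commute)
  have c: "c\<^sup>2 = (Re u)\<^sup>2 + (Im u)\<^sup>2"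
    unfolding c_def u_def dist_norm cmod_power2 by (simp add: power2_commute)
  have "16 * (tri_area A B C)\<^sup>2 = 4 * (Im u * Re v - Re u * Im v)\<^sup>2"
    unfolding tri_area_def u_def v_def by (simp add: power_divide algebra_simps)
  also have "\<dots> = 4 * b\<^sup>2 * c\<^sup>2 - (b\<^sup>2 + c\<^sup>2 - a\<^sup>2)\<^sup>2"
    unfolding a b c by (simp add: power2_eq_square algebra_simps)
  also have "\<dots> = (a + b + c) * (b + c - a) * (c + a - b) * (a + b - c)"
    by (simp add: power2_eq_square algebra_simps)
  finally show ?thesis .
qed

lemma tri_area_pos_iff: "tri_area A B C > 0 \<longleftrightarrow> nondegenerate_triangle A B C"
  unfolding tri_area_def nondegenerate_triangle_def by auto

lemma nondegenerate_triangle_distinct: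
  assumes "nondegenerate_triangle A B C"
  shows "A \<noteq> B" "B \<noteq> C" "C \<noteq> A"
  using assms unfolding nondegenerate_triangle_def by (auto simp: algebra_simps)

lemma equable_iff_side_lengths:
  fixes A B C :: complex
  defines "a \<equiv> dist B C" and "b \<equiv> dist C A" and "c \<equiv> dist A B"
  assumes "nondegenerate_triangle A B C"
  shows "equable A B C \<longleftrightarrow> 16 * (a + b + c) = (b + c - a) * (c + a - b) * (a + b - c)"
proof -
  define P where "P = a + b + c"
  define Q where "Q = (b + c - a) * (c + a - b) * (a + b - c)"
  have heron: "16 * (tri_area A B C)\<^sup>2 = P * Q"
    unfolding P_def Q_def a_def b_def c_def tri_area_heron by (simp add: mult.assoc)
  have area: "tri_area A B C > 0" using assms(4) tri_area_pos_iff by blast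
  have "equable A B C \<longleftrightarrow> tri_area A B C = P"
    using assms(4) unfolding equable_def tri_perimeter_def P_def a_def b_def c_def by auto
  also have "\<dots> \<longleftrightarrow> 16 * P = Q"
  proof
    assume "tri_area A B C = P"
    then have "P * (16 * P) = P * Q" using heron by (simp add: power2_eq_square)
    then show "16 * P = Q" using area \<open>tri_area A B C = P\<close> by simp
  next
    assume "16 * P = Q"
    then have "(tri_area A B C)\<^sup>2 = P\<^sup>2"
      using heron by (simp add: power2_eq_square flip: \<open>16 * P = Q\<close>)
    moreover have "P \<ge> 0" unfolding P_def a_def b_def c_def by simp
    ultimately show "tri_area A B C = P" using area by (simp add: power2_eq_iff_nonneg)
  qed
  finally show ?thesis unfolding P_def Q_def .
qed

lemma equable_iff_sqrt3_int_sides: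
  fixes k1 k2 k3 :: int
  assumes "nondegenerate_triangle A B C"
    and "dist B C = sqrt 3 * k1" "dist C A = sqrt 3 * k2" "dist A B = sqrt 3 * k3"
  shows "equable A B C \<longleftrightarrow>
    16 * (k1 + k2 + k3) = 3 * (k2 + k3 - k1) * (k3 + k1 - k2) * (k1 + k2 - k3)"
proof -
  have "equable A B C \<longleftrightarrow> sqrt 3 * of_int (16 * (k1 + k2 + k3))
      = sqrt 3 * of_int (3 * (k2 + k3 - k1) * (k3 + k1 - k2) * (k1 + k2 - k3))"
    unfolding equable_iff_side_lengths[OF assms(1)] assms(2-4) by (simp add: algebra_simps)
  also have "\<dots> \<longleftrightarrow> 16 * (k1 + k2 + k3) = 3 * (k2 + k3 - k1) * (k3 + k1 - k2) * (k1 + k2 - k3)"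
    unfolding mult_cancel_left of_int_eq_iff by simp
  finally show ?thesis .
qed

lemma equable_side_equation_sorted_solutions:
  fixes k1 k2 k3 :: int
  assumes "0 < k1" "k1 \<le> k2" "k2 \<le> k3"
    and eq: "16 * (k1 + k2 + k3) = 3 * (k2 + k3 - k1) * (k3 + k1 - k2) * (k1 + k2 - k3)"
  shows "(k1, k2, k3) = (4, 4, 4) \<or> (k1, k2, k3) = (3, 7, 8)"
proof -
  define x where "x = k2 + k3 - k1"
  define y where "y = k3 + k1 - k2"
  define z where "z = k1 + k2 - k3"
  have eq': "16 * (x + y + z) = 3 * (x * y * z)"
    using eq unfolding x_def y_def z_def by (simp add: algebra_simps)
  have "0 < x" "0 < y" "z \<le> y" "y \<le> x" "0 < x + y + z"
    using assms(1-3) unfolding x_def y_def z_def by simp_all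
  have "0 < z"
  proof (rule ccontr)
    assume "\<not> 0 < z"
    then have "x * y * z \<le> 0"
      using \<open>0 < x\<close> \<open>0 < y\<close> by (simp add: mult_nonneg_nonpos)
    then show False using eq' \<open>0 < x + y + z\<close> by simp
  qed
  have "x * (3 * (y * z)) \<le> x * 48"
    using eq' \<open>z \<le> y\<close> \<open>y \<le> x\<close> by (simp add: algebra_simps)
  then have "y * z \<le> 16" using \<open>0 < x\<close> by simp
  moreover have "z * z \<le> y * z" using \<open>z \<le> y\<close> \<open>0 < z\<close> by simp
  ultimately have "z * z \<le> 16" by simp
  have "z \<le> 4"
  proof (rule ccontr)
    assume "\<not> z \<le> 4"
    then have "5 * 5 \<le> z * z" by (intro mult_mono) simp_all
    then show False using \<open>z * z \<le> 16\<close> by simp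
  qed
  have "y * 1 \<le> y * z" using \<open>0 < y\<close> \<open>0 < z\<close> by (intro mult_left_mono) simp_all
  then have "y \<le> 16" using \<open>y * z \<le> 16\<close> by simp
  have "z = 1 \<or> z = 2 \<or> z = 3 \<or> z = 4" using \<open>0 < z\<close> \<open>z \<le> 4\<close> by presburger
  moreover have "y = 1 \<or> y = 2 \<or> y = 3 \<or> y = 4 \<or> y = 5 \<or> y = 6 \<or> y = 7 \<or> y = 8 \<or> y = 9
    \<or> y = 10 \<or> y = 11 \<or> y = 12 \<or> y = 13 \<or> y = 14 \<or> y = 15 \<or> y = 16"
    using \<open>0 < y\<close> \<open>y \<le> 16\<close> by presburger
  moreover have "2 * k1 = y + z" "2 * k2 = x + z" "2 * k3 = x + y"
    unfolding x_def y_def z_def by simp_all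
  \<comment> \<open>For fixed \<open>y\<close> and \<open>z\<close> the equation is linear in \<open>x\<close>; parity eliminates the
    spurious solutions such as \<open>(x, y, z) = (56, 6, 1)\<close>.\<close>
  ultimately show ?thesis
    using eq' \<open>y * z \<le> 16\<close> \<open>z \<le> y\<close> \<open>y \<le> x\<close> by (elim disjE; simp; presburger)
qed

lemma equable_rotate: "equable A B C \<Longrightarrow> equable B C A"
  unfolding equable_def nondegenerate_triangle_def tri_perimeter_def tri_area_def
  by (simp add: algebra_simps)

lemma equable_swap: "equable A B C \<Longrightarrow> equable B A C"
  unfolding equable_def nondegenerate_triangle_def tri_perimeter_def tri_area_def
  by (simp add: algebra_simps dist_commute)

lemma triangle_wlog_sorted_sides:
  fixes P :: "complex \<Rightarrow> complex \<Rightarrow> complex \<Rightarrow> bool"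
  assumes rotate: "\<And>A B C. P A B C \<Longrightarrow> P B C A"
    and swap: "\<And>A B C. P A B C \<Longrightarrow> P B A C"
    and sorted: "\<And>A B C. dist B C \<le> dist C A \<Longrightarrow> dist C A \<le> dist A B \<Longrightarrow> P A B C"
  shows "P A B C"
proof -
  have "P A B C \<or> P A C B \<or> P B A C \<or> P B C A \<or> P C A B \<or> P C B A"
    using sorted[of A B C] sorted[of A C B] sorted[of B A C] sorted[of B C A] sorted[of C A B]
      sorted[of C B A]
    by (simp add: dist_commute) linarith
  then show ?thesis using rotate swap by blast
qed

section \<open>Congruent triangles\<close>

lemma congruent_tri_vertex_sets:
  assumes "congruent_tri A B C X Y Z" "{A, B, C} = {A', B', C'}" "{X, Y, Z} = {X', Y', Z'}"
  shows "congruent_tri A' B' C' X' Y' Z'"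
  using assms(1) unfolding congruent_tri_def assms(2,3) .

lemma congruent_tri_trans:
  assumes "congruent_tri A B C A' B' C'" "congruent_tri A' B' C' A'' B'' C''"
  shows "congruent_tri A B C A'' B'' C''"
proof -
  obtain f where f: "\<forall>x y. dist (f x) (f y) = dist x y" "f ` {A, B, C} = {A', B', C'}"
    using assms(1) unfolding congruent_tri_def by blast
  obtain g where g: "\<forall>x y. dist (g x) (g y) = dist x y" "g ` {A', B', C'} = {A'', B'', C''}"
    using assms(2) unfolding congruent_tri_def by blast
  have "(g \<circ> f) ` {A, B, C} = {A'', B'', C''}" using f(2) g(2) by (simp only: image_comp[symmetric])
  then show ?thesis using f(1) g(1) unfolding congruent_tri_def by (intro exI[of _ "g \<circ> f"]) simp
qed

lemma congruent_tri_cnj: "congruent_tri A B C (cnj A) (cnj B) (cnj C)"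
  unfolding congruent_tri_def
  by (intro exI[of _ cnj]) (simp add: dist_norm flip: complex_cnj_diff)

lemma congruent_tri_dist:
  assumes "congruent_tri A B C A' B' C'"
  shows "\<exists>X\<in>{A, B, C}. \<exists>Y\<in>{A, B, C}. dist A' B' = dist X Y"
proof -
  obtain f where f: "\<forall>x y. dist (f x) (f y) = dist x y" "f ` {A, B, C} = {A', B', C'}"
    using assms unfolding congruent_tri_def by blast
  then have "A' \<in> f ` {A, B, C}" "B' \<in> f ` {A, B, C}" by auto
  then obtain X Y where "X \<in> {A, B, C}" "Y \<in> {A, B, C}" "A' = f X" "B' = f Y" by (elim imageE)
  then show ?thesis using f(1) by metis
qed

lemma congruent_tri_if_mult_cnj_eq:
  assumes "(B - A) * cnj (C - A) = (B' - A') * cnj (C' - A')" "dist A B = dist A' B'" "A \<noteq> B"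
  shows "congruent_tri A B C A' B' C'"
proof -
  define u where "u = B - A"
  define u' where "u' = B' - A'"
  define w where "w = u' / u"
  have u: "u \<noteq> 0" and norm_u: "cmod u' = cmod u"
    using assms(2,3) unfolding u_def u'_def by (simp_all add: dist_norm norm_minus_commute)
  then have "u' \<noteq> 0" by auto
  have "cnj u' * (u' * (C - A)) = cnj u' * (u * (C' - A'))"
  proof -
    have "cnj u' * u' = cnj u * u"
      using norm_u by (simp flip: complex_norm_square add: mult.commute)
    moreover have "cnj u * (C - A) = cnj u' * (C' - A')"
      using arg_cong[OF assms(1), of cnj] unfolding u_def u'_def by simp
    ultimately show ?thesis by (metis mult.assoc mult.left_commute)
  qed
  then have "u' * (C - A) = u * (C' - A')" using \<open>u' \<noteq> 0\<close> by simp
  then have "w * (C - A) = C' - A'"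
    using u unfolding w_def by (metis nonzero_mult_div_cancel_left times_divide_eq_left)
  moreover have "w * (B - A) = B' - A'" using u unfolding w_def u_def u'_def by simp
  moreover have "cmod w = 1" using norm_u u unfolding w_def by (simp add: norm_divide)
  ultimately show ?thesis
    unfolding congruent_tri_def
    by (intro exI[of _ "\<lambda>z. A' + w * (z - A)"])
       (auto simp: dist_norm norm_mult simp flip: right_diff_distrib)
qed

lemma Re_mult_cnj_law_of_cosines:
  "2 * Re (u * cnj v) = (cmod u)\<^sup>2 + (cmod v)\<^sup>2 - (cmod (u - v))\<^sup>2"
  unfolding cmod_power2 by (simp add: power2_eq_square algebra_simps)

lemma congruent_tri_if_dist_eq:
  assumes "dist A B = dist A' B'" "dist B C = dist B' C'" "dist C A = dist C' A'" "A \<noteq> B"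
  shows "congruent_tri A B C A' B' C'"
proof -
  define p where "p = (B - A) * cnj (C - A)"
  define p' where "p' = (B' - A') * cnj (C' - A')"
  have "(B - A) - (C - A) = B - C" "(B' - A') - (C' - A') = B' - C'" by simp_all
  then have "Re p = Re p'"
    using assms(1-3) Re_mult_cnj_law_of_cosines[of "B - A" "C - A"]
      Re_mult_cnj_law_of_cosines[of "B' - A'" "C' - A'"] unfolding p_def p'_def
    by (simp add: dist_norm norm_minus_commute)
  moreover have "cmod (B - A) = cmod (B' - A')" "cmod (C - A) = cmod (C' - A')"
    using assms(1,3) by (simp_all add: dist_norm norm_minus_commute)
  then have "cmod p = cmod p'" unfolding p_def p'_def norm_mult complex_mod_cnj by simp
  \<comment> \<open>The law of cosines fixes \<open>Re p\<close> and two sides fix \<open>cmod p\<close>, so \<open>p\<close> is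
    known up to conjugation.\<close>
  ultimately have "p = p' \<or> p = cnj p'"
    by (simp add: complex_eq_iff cmod_def power2_eq_iff)
  then show ?thesis
  proof
    assume "p = p'"
    then show ?thesis using assms(1,4) unfolding p_def p'_def by (rule congruent_tri_if_mult_cnj_eq)
  next
    assume "p = cnj p'"
    then have "(cnj B - cnj A) * cnj (cnj C - cnj A) = p'" unfolding p_def
      by (metis complex_cnj_cnj complex_cnj_diff complex_cnj_mult)
    moreover have "dist (cnj A) (cnj B) = dist A' B'" "cnj A \<noteq> cnj B"
      using assms(1,4) by (simp_all add: dist_norm flip: complex_cnj_diff)
    ultimately have "congruent_tri (cnj A) (cnj B) (cnj C) A' B' C'"
      unfolding p'_def by (rule congruent_tri_if_mult_cnj_eq)
    then show ?thesis using congruent_tri_cnj congruent_tri_trans by blast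
  qed
qed

section \<open>Square roots of integers\<close>

lemma Ints_if_Rats_power2_Ints:
  fixes x :: real
  assumes "x \<in> \<rat>" "x\<^sup>2 \<in> \<int>"
  shows "x \<in> \<int>"
proof -
  obtain p q :: int where q: "q > 0" and "coprime p q" and x: "x = of_int p / of_int q"
    using assms(1) Rats_cases' by blast
  obtain n where n: "x\<^sup>2 = of_int n" using assms(2) Ints_cases by blast
  have "of_int (n * q\<^sup>2) = (of_int (p\<^sup>2) :: real)"
    using n q unfolding x by (simp add: field_simps)
  then have "p\<^sup>2 = q * (n * q)" unfolding of_int_eq_iff by (simp add: power2_eq_square algebra_simps)
  then have "q dvd p\<^sup>2" by (rule dvdI)
  moreover have "coprime q (p\<^sup>2)" using \<open>coprime p q\<close> by (simp add: coprime_commute)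
  ultimately have "is_unit q" using coprime_common_divisor[of q "p\<^sup>2" q] by simp
  then have "q = 1" using q by simp
  then show ?thesis using x by simp
qed

lemma sqrt3_multiple_if_Rats:
  fixes c :: real
  assumes "c\<^sup>2 \<in> \<int>" "sqrt 3 * c \<in> \<rat>"
  shows "\<exists>k::int. c = sqrt 3 * k"
proof -
  have "(sqrt 3 * c)\<^sup>2 \<in> \<int>" using assms(1) by (simp add: power_mult_distrib Ints_mult)
  then have "sqrt 3 * c \<in> \<int>" using assms(2) Ints_if_Rats_power2_Ints by blast
  then obtain m where m: "sqrt 3 * c = of_int m" using Ints_cases by blast
  obtain n where n: "c\<^sup>2 = of_int n" using assms(1) Ints_cases by blast
  have "of_int (m\<^sup>2) = (of_int (3 * n) :: real)"
    using arg_cong[OF m, of power2] n by (simp add: power_mult_distrib)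
  then have "3 dvd m\<^sup>2" unfolding of_int_eq_iff by simp
  moreover have "prime (3 :: int)" by simp
  ultimately have "3 dvd m" using prime_dvd_power_int by blast
  then obtain k where "m = 3 * k" by (rule dvdE)
  then have "sqrt 3 * c = sqrt 3 * (sqrt 3 * of_int k)" using m by simp
  then show ?thesis by auto
qed

lemma Rats_mult_if_sum_of_square_roots:
  fixes a b c s :: real
  assumes nonneg: "a \<ge> 0" "b \<ge> 0" "c \<ge> 0" "s \<ge> 0"
    and Rats: "a\<^sup>2 \<in> \<rat>" "b\<^sup>2 \<in> \<rat>" "c\<^sup>2 \<in> \<rat>" "s\<^sup>2 \<in> \<rat>"
    and sum: "a + b + c = s"
  shows "s * c \<in> \<rat>"
proof -
  define R where "R = s\<^sup>2 + c\<^sup>2 - a\<^sup>2 - b\<^sup>2"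
  have R: "R \<in> \<rat>" unfolding R_def using Rats by simp
  have "a + b = s - c" using sum by simp
  then have "(a + b)\<^sup>2 = (s - c)\<^sup>2" by simp
  then have ab: "2 * (a * b) = R - 2 * (s * c)"
    unfolding R_def by (simp add: power2_eq_square algebra_simps)
  then have "(2 * (a * b))\<^sup>2 = (R - 2 * (s * c))\<^sup>2" by simp
  then have "4 * (a\<^sup>2 * b\<^sup>2) = R\<^sup>2 - 4 * R * (s * c) + 4 * (s\<^sup>2 * c\<^sup>2)"
    by (simp add: power2_eq_square algebra_simps)
  show ?thesis
  proof (cases "R = 0")
    case True
    then have "a * b + s * c = 0" using ab by simp
    moreover have "a * b \<ge> 0" "s * c \<ge> 0" using nonneg by simp_all
    ultimately have "s * c = 0" by linarith
    then show ?thesis by (metis Rats_0)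
  next
    case False
    then have "s * c = (R\<^sup>2 + 4 * (s\<^sup>2 * c\<^sup>2) - 4 * (a\<^sup>2 * b\<^sup>2)) / (4 * R)"
      using \<open>4 * (a\<^sup>2 * b\<^sup>2) = _\<close> by (simp add: field_simps)
    also have "\<dots> \<in> \<rat>" using R Rats by simp
    finally show ?thesis .
  qed
qed

lemma sqrt3_multiple_if_sum_of_square_roots:
  fixes a b c q :: real
  assumes "a \<ge> 0" "b \<ge> 0" "c \<ge> 0" "a\<^sup>2 \<in> \<int>" "b\<^sup>2 \<in> \<int>" "c\<^sup>2 \<in> \<int>"
    and "q \<in> \<rat>" "q > 0" "a + b + c = sqrt 3 * q"
  shows "\<exists>k::int. c = sqrt 3 * k"
proof (rule sqrt3_multiple_if_Rats)
  show "c\<^sup>2 \<in> \<int>" by fact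
  have "(sqrt 3 * q)\<^sup>2 \<in> \<rat>" using \<open>q \<in> \<rat>\<close> by (simp add: power_mult_distrib)
  then have "sqrt 3 * q * c \<in> \<rat>"
    using assms Ints_subset_Rats by (intro Rats_mult_if_sum_of_square_roots[of a b]) auto
  have "sqrt 3 * c = sqrt 3 * q * c / q" using \<open>q > 0\<close> by simp
  also have "\<dots> \<in> \<rat>" using \<open>sqrt 3 * q * c \<in> \<rat>\<close> \<open>q \<in> \<rat>\<close> by (rule Rats_divide)
  finally show "sqrt 3 * c \<in> \<rat>" .
qed

section \<open>Equable triangles on the Eisenstein lattice\<close>

lemma eisenstein_latticeI: "of_int m + of_int n * eis_omega \<in> eisenstein_lattice"
  unfolding eisenstein_lattice_def by blast

lemma eisenstein_latticeE:
  assumes "z \<in> eisenstein_lattice"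
  obtains m n :: int where "z = of_int m + of_int n * eis_omega"
  using assms unfolding eisenstein_lattice_def by blast

lemma eisenstein_lattice_diff:
  assumes "z \<in> eisenstein_lattice" "w \<in> eisenstein_lattice"
  shows "z - w \<in> eisenstein_lattice"
proof -
  obtain m n m' n' where "z = of_int m + of_int n * eis_omega" "w = of_int m' + of_int n' * eis_omega"
    using assms eisenstein_latticeE by metis
  then have "z - w = of_int (m - m') + of_int (n - n') * eis_omega" by (simp add: algebra_simps)
  then show ?thesis by (simp only: eisenstein_latticeI)
qed

lemma norm_power2_eisenstein_lattice:
  assumes "z \<in> eisenstein_lattice"
  shows "(cmod z)\<^sup>2 \<in> \<int>"
proof -
  obtain m n where z: "z = of_int m + of_int n * eis_omega"
    using assms eisenstein_latticeE by blast
  have "(cmod z)\<^sup>2 = of_int (m\<^sup>2 - m * n + n\<^sup>2)"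
    unfolding z cmod_power2 eis_omega_def by (simp add: power2_eq_square algebra_simps)
  then show ?thesis by simp
qed

lemma Im_mult_cnj_eisenstein_lattice:
  assumes "z \<in> eisenstein_lattice" "w \<in> eisenstein_lattice"
  obtains D :: int where "Im (z * cnj w) = sqrt 3 / 2 * D"
proof -
  obtain m n m' n' where "z = of_int m + of_int n * eis_omega" "w = of_int m' + of_int n' * eis_omega"
    using assms eisenstein_latticeE by metis
  then have "Im (z * cnj w) = sqrt 3 / 2 * of_int (n * m' - m * n')"
    unfolding eis_omega_def by (simp add: algebra_simps)
  then show ?thesis using that by blast
qed

lemma dist_eq_sqrt3_mult:
  assumes "k \<ge> 0" "(dist z w)\<^sup>2 = 3 * k\<^sup>2"
  shows "dist z w = sqrt 3 * k"
proof -
  have "dist z w = sqrt (3 * k\<^sup>2)" using assms(2) by (metis real_sqrt_abs abs_of_nonneg zero_le_dist)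
  then show ?thesis using assms(1) by (simp add: real_sqrt_mult)
qed

lemma equable_eisenstein_triangle_sides:
  assumes "A \<in> eisenstein_lattice" "B \<in> eisenstein_lattice" "C \<in> eisenstein_lattice"
    and "equable A B C"
  obtains k1 k2 k3 :: int
  where "dist B C = sqrt 3 * k1" "dist C A = sqrt 3 * k2" "dist A B = sqrt 3 * k3"
    and "0 < k1" "0 < k2" "0 < k3"
    and "16 * (k1 + k2 + k3) = 3 * (k2 + k3 - k1) * (k3 + k1 - k2) * (k1 + k2 - k3)"
proof -
  have nondeg: "nondegenerate_triangle A B C" using assms(4) unfolding equable_def by simp
  obtain D :: int where D: "Im ((B - A) * cnj (C - A)) = sqrt 3 / 2 * D"
    using Im_mult_cnj_eisenstein_lattice eisenstein_lattice_diff assms(1-3) by metis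
  then have q: "\<bar>D\<bar> / 4 \<in> \<rat>" "\<bar>D\<bar> / 4 > 0"
    using nondeg unfolding nondegenerate_triangle_def by auto
  have perimeter: "dist B C + dist C A + dist A B = sqrt 3 * (\<bar>D\<bar> / 4)"
    using assms(4) unfolding equable_def tri_perimeter_def tri_area_def D by (simp add: abs_mult)
  have sq: "(dist B C)\<^sup>2 \<in> \<int>" "(dist C A)\<^sup>2 \<in> \<int>" "(dist A B)\<^sup>2 \<in> \<int>"
    unfolding dist_norm
    using norm_power2_eisenstein_lattice eisenstein_lattice_diff assms(1-3) by blast+
  have "dist C A + dist A B + dist B C = sqrt 3 * (\<bar>D\<bar> / 4)" using perimeter by linarith
  then obtain k1 :: int where side1: "dist B C = sqrt 3 * k1"
    using sqrt3_multiple_if_sum_of_square_roots[OF zero_le_dist zero_le_dist zero_le_dist sq(2,3,1) q]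
    by blast
  have "dist A B + dist B C + dist C A = sqrt 3 * (\<bar>D\<bar> / 4)" using perimeter by linarith
  then obtain k2 :: int where side2: "dist C A = sqrt 3 * k2"
    using sqrt3_multiple_if_sum_of_square_roots[OF zero_le_dist zero_le_dist zero_le_dist sq(3,1,2) q]
    by blast
  obtain k3 :: int where side3: "dist A B = sqrt 3 * k3"
    using sqrt3_multiple_if_sum_of_square_roots[OF zero_le_dist zero_le_dist zero_le_dist sq q perimeter]
    by blast
  note k = side1 side2 side3
  have "0 < dist B C" "0 < dist C A" "0 < dist A B"
    using nondegenerate_triangle_distinct[OF nondeg] by auto
  then have "0 < k1" "0 < k2" "0 < k3" unfolding k by (simp_all add: zero_less_mult_iff)
  moreover have "16 * (k1 + k2 + k3) = 3 * (k2 + k3 - k1) * (k3 + k1 - k2) * (k1 + k2 - k3)"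
    using equable_iff_sqrt3_int_sides[OF nondeg k] assms(4) by blast
  ultimately show ?thesis using k by (intro that)
qed

lemma sides_eisenstein_equilateral:
  shows "dist (8 + 4 * eis_omega) (4 + 8 * eis_omega) = sqrt 3 * 4"
    and "dist (4 + 8 * eis_omega) 0 = sqrt 3 * 4"
    and "dist 0 (8 + 4 * eis_omega) = sqrt 3 * 4"
  by (rule dist_eq_sqrt3_mult, simp, simp only: dist_norm cmod_power2 eis_omega_def,
      simp add: power_mult_distrib field_simps)+

lemma sides_eisenstein_scalene:
  shows "dist (6 + 3 * eis_omega) (8 + 16 * eis_omega) = sqrt 3 * 7"
    and "dist (8 + 16 * eis_omega) 0 = sqrt 3 * 8"
    and "dist 0 (6 + 3 * eis_omega) = sqrt 3 * 3"
  by (rule dist_eq_sqrt3_mult, simp, simp only: dist_norm cmod_power2 eis_omega_def,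
      simp add: power_mult_distrib field_simps)+

lemma equable_eisenstein_equilateral: "equable (8 + 4 * eis_omega) (4 + 8 * eis_omega) 0"
proof -
  have "nondegenerate_triangle (8 + 4 * eis_omega) (4 + 8 * eis_omega) 0"
    unfolding nondegenerate_triangle_def eis_omega_def by simp
  from equable_iff_sqrt3_int_sides[OF this, of 4 4 4] show ?thesis
    using sides_eisenstein_equilateral by simp
qed

lemma equable_eisenstein_scalene: "equable (6 + 3 * eis_omega) (8 + 16 * eis_omega) 0"
proof -
  have "nondegenerate_triangle (6 + 3 * eis_omega) (8 + 16 * eis_omega) 0"
    unfolding nondegenerate_triangle_def eis_omega_def by simp
  from equable_iff_sqrt3_int_sides[OF this, of 8 3 7] show ?thesis
    using sides_eisenstein_scalene by simp
qed

lemma not_congruent_eisenstein_equilateral_scalene: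
  "\<not> congruent_tri (8 + 4 * eis_omega) (4 + 8 * eis_omega) 0 (6 + 3 * eis_omega) (8 + 16 * eis_omega) 0"
proof
  assume "congruent_tri (8 + 4 * eis_omega) (4 + 8 * eis_omega) 0 (6 + 3 * eis_omega) (8 + 16 * eis_omega) 0"
  then obtain X Y where "X \<in> {8 + 4 * eis_omega, 4 + 8 * eis_omega, 0}"
    "Y \<in> {8 + 4 * eis_omega, 4 + 8 * eis_omega, 0}" "sqrt 3 * 7 = dist X Y"
    using congruent_tri_dist sides_eisenstein_scalene(1) by metis
  then have "sqrt 3 * 7 = 0 \<or> sqrt 3 * 7 = sqrt 3 * (4 :: real)"
    using sides_eisenstein_equilateral by (auto simp: dist_commute)
  then show False by simp
qed

lemma equable_eisenstein_congruent_cases_sorted: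
  assumes "A \<in> eisenstein_lattice" "B \<in> eisenstein_lattice" "C \<in> eisenstein_lattice"
    and "equable A B C" and sorted: "dist B C \<le> dist C A" "dist C A \<le> dist A B"
  shows "congruent_tri A B C (8 + 4 * eis_omega) (4 + 8 * eis_omega) 0
    \<or> congruent_tri A B C (6 + 3 * eis_omega) (8 + 16 * eis_omega) 0"
proof -
  obtain k1 k2 k3 :: int
    where k: "dist B C = sqrt 3 * k1" "dist C A = sqrt 3 * k2" "dist A B = sqrt 3 * k3"
    and "0 < k1" "16 * (k1 + k2 + k3) = 3 * (k2 + k3 - k1) * (k3 + k1 - k2) * (k1 + k2 - k3)"
    using equable_eisenstein_triangle_sides[OF assms(1-4)] by metis
  moreover have "k1 \<le> k2" "k2 \<le> k3" using sorted unfolding k by simp_all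
  ultimately have "(k1, k2, k3) = (4, 4, 4) \<or> (k1, k2, k3) = (3, 7, 8)"
    using equable_side_equation_sorted_solutions by blast
  moreover have "A \<noteq> B"
    using assms(4) nondegenerate_triangle_distinct unfolding equable_def by blast
  ultimately show ?thesis
  proof (elim disjE)
    assume "(k1, k2, k3) = (4, 4, 4)"
    then show ?thesis
      using congruent_tri_if_dist_eq[OF _ _ _ \<open>A \<noteq> B\<close>] k sides_eisenstein_equilateral by simp
  next
    assume "(k1, k2, k3) = (3, 7, 8)"
    then have "congruent_tri A B C (8 + 16 * eis_omega) 0 (6 + 3 * eis_omega)"
      using congruent_tri_if_dist_eq[OF _ _ _ \<open>A \<noteq> B\<close>] k sides_eisenstein_scalene by simp
    moreover have "{8 + 16 * eis_omega, 0, 6 + 3 * eis_omega} = {6 + 3 * eis_omega, 8 + 16 * eis_omega, 0}"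
      by auto
    ultimately show ?thesis using congruent_tri_vertex_sets by blast
  qed
qed

lemma equable_eisenstein_congruent_cases:
  assumes "A \<in> eisenstein_lattice" "B \<in> eisenstein_lattice" "C \<in> eisenstein_lattice"
    and "equable A B C"
  shows "congruent_tri A B C (8 + 4 * eis_omega) (4 + 8 * eis_omega) 0
    \<or> congruent_tri A B C (6 + 3 * eis_omega) (8 + 16 * eis_omega) 0"
proof -
  let ?Q = "\<lambda>A B C. congruent_tri A B C (8 + 4 * eis_omega) (4 + 8 * eis_omega) 0
    \<or> congruent_tri A B C (6 + 3 * eis_omega) (8 + 16 * eis_omega) 0"
  let ?P = "\<lambda>A B C. A \<in> eisenstein_lattice \<and> B \<in> eisenstein_lattice \<and> C \<in> eisenstein_lattice
    \<and> equable A B C \<longrightarrow> ?Q A B C"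
  have "?P A B C"
  proof (rule triangle_wlog_sorted_sides[where P = ?P])
    show "?P B C A" if "?P A B C" for A B C
    proof
      assume "B \<in> eisenstein_lattice \<and> C \<in> eisenstein_lattice \<and> A \<in> eisenstein_lattice
        \<and> equable B C A"
      then have "?Q A B C" using that equable_rotate by blast
      moreover have "{A, B, C} = {B, C, A}" by auto
      ultimately show "?Q B C A" using congruent_tri_vertex_sets by blast
    qed
    show "?P B A C" if "?P A B C" for A B C
    proof
      assume "B \<in> eisenstein_lattice \<and> A \<in> eisenstein_lattice \<and> C \<in> eisenstein_lattice
        \<and> equable B A C"
      then have "?Q A B C" using that equable_swap by blast
      moreover have "{A, B, C} = {B, A, C}" by auto
      ultimately show "?Q B A C" using congruent_tri_vertex_sets by blast
    qed
    show "?P A B C" if "dist B C \<le> dist C A" "dist C A \<le> dist A B" for A B C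
      using equable_eisenstein_congruent_cases_sorted that by blast
  qed
  then show ?thesis using assms by blast
qed

theorem mainTheorem1:
  defines "Aa \<equiv> 8 + 4 * eis_omega" and "Ba \<equiv> 4 + 8 * eis_omega" and "Ca \<equiv> (0::complex)"
      and "Ab \<equiv> 6 + 3 * eis_omega" and "Bb \<equiv> 8 + 16 * eis_omega" and "Cb \<equiv> (0::complex)"
  shows "Aa \<in> eisenstein_lattice \<and> Ba \<in> eisenstein_lattice \<and> Ca \<in> eisenstein_lattice \<and> equable Aa Ba Ca
       \<and> Ab \<in> eisenstein_lattice \<and> Bb \<in> eisenstein_lattice \<and> Cb \<in> eisenstein_lattice \<and> equable Ab Bb Cb
       \<and> \<not> congruent_tri Aa Ba Ca Ab Bb Cb
       \<and> (\<forall>A B C. A \<in> eisenstein_lattice \<and> B \<in> eisenstein_lattice \<and> C \<in> eisenstein_lattice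
                   \<and> equable A B C \<longrightarrow>
                   congruent_tri A B C Aa Ba Ca \<or> congruent_tri A B C Ab Bb Cb)"
proof -
  have "Aa \<in> eisenstein_lattice" "Ba \<in> eisenstein_lattice" "Ca \<in> eisenstein_lattice"
    "Ab \<in> eisenstein_lattice" "Bb \<in> eisenstein_lattice" "Cb \<in> eisenstein_lattice"
    using eisenstein_latticeI[of 8 4] eisenstein_latticeI[of 4 8] eisenstein_latticeI[of 0 0]
      eisenstein_latticeI[of 6 3] eisenstein_latticeI[of 8 16]
    unfolding Aa_def Ba_def Ca_def Ab_def Bb_def Cb_def by simp_all
  then show ?thesis
    using equable_eisenstein_equilateral equable_eisenstein_scalene
      not_congruent_eisenstein_equilateral_scalene equable_eisenstein_congruent_cases
    unfolding Aa_def Ba_def Ca_def Ab_def Bb_def Cb_def by blast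
qed

end
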